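(* With the order on $\widehat{\mathbb{R}^{\mathcal{D}_0}}$ defined in the context, $\widehat{\mathbb{R}^{\mathcal{D}_0}}$ is a totally ordered field, and for $a\in\widehat{\mathbb{R}^{\mathcal{D}_0}}$ we have $a\ge0$ if and only if $a=b^2$ for some $b\in\widehat{\mathbb{R}^{\mathcal{D}_0}}$. Consequently the map $|\cdot|:\widehat{\mathbb{C}^{\mathcal{D}_0}}\to\widehat{\mathbb{R}^{\mathcal{D}_0}}$, $|a+ib|=\sqrt{a^2+b^2}$ ($a,b\in\widehat{\mathbb{R}^{\mathcal{D}_0}}$), is an absolute value on $\widehat{\mathbb{C}^{\mathcal{D}_0}}$.
   Context: Fix $d\in\mathbb{N}$, $\mathcal{D}_0=\mathcal{D}(\mathbb{R}^d)$. For $\varphi\in\mathcal{D}_0$ let $R_\varphi=\sup\{\|x\|:\varphi(x)\neq0\}$ if $\varphi\neq0$, $R_0=1$. For $n\in\mathbb{N}$, $\mathcal{D}_n$ is the set of $\varphi\in\mathcal{D}_0$ that are real-valued, even, with $R_\varphi\le1/n$, $\int\varphi=1$, $\int x^\alpha\varphi(x)dx=0$ for $1\le|\alpha|\le n$, $\int|\varphi|\le1+1/n$, and $\sup_x|\partial^\alpha\varphi(x)|\le R_\varphi^{-2(|\alpha|+d)}$ for $|\alpha|\le n$. $\mathcal{U}$ is a fixed free ultrafilter on $\mathcal{D}_0$ containing every $\mathcal{D}_n$ (and $\mathfrak c^+$-good, $\mathfrak c=\mathrm{card}\,\mathbb{R}$). "$P(\varphi)$ a.e." means $\{\varphi:P(\varphi)\}\in\mathcal{U}$.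 $\mathcal{M}(\mathbb{C}^{\mathcal{D}_0})$: nets $(A_\varphi)\in\mathbb{C}^{\mathcal{D}_0}$ with $|A_\varphi|\le R_\varphi^{-m}$ a.e. for some $m\in\mathbb{N}$; $\mathcal{N}(\mathbb{C}^{\mathcal{D}_0})$: nets with $|A_\varphi|<R_\varphi^p$ a.e. for all $p\in\mathbb{N}$. $\widehat{\mathbb{C}^{\mathcal{D}_0}}=\mathcal{M}/\mathcal{N}$ (pointwise operations), $\widehat{A_\varphi}$ the class, $\widehat{\mathbb{R}^{\mathcal{D}_0}}$ the classes of real-valued moderate nets. Order: a nonzero $\widehat{A_\varphi}\in\widehat{\mathbb{R}^{\mathcal{D}_0}}$ satisfies $\widehat{A_\varphi}>0$ iff $A_\varphi>0$ a.e. *)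

theory Defs
  imports "HOL-Analysis.Analysis" "HOL-Algebra.Ring"
begin

type_synonym 'n test = "real ^ 'n \<Rightarrow> complex"
type_synonym 'n net = "'n test \<Rightarrow> complex"

definition pd :: "'n::finite \<Rightarrow> 'n test \<Rightarrow> 'n test" where
  "pd i f = (\<lambda>x. vector_derivative (\<lambda>t. f (x + t *\<^sub>R axis i 1)) (at 0))"

fun dlist :: "'n::finite list \<Rightarrow> 'n test \<Rightarrow> 'n test" where
  "dlist [] f = f"
| "dlist (i # is) f = pd i (dlist is f)"

definition smooth :: "'n::finite test \<Rightarrow> bool" where
  "smooth f \<longleftrightarrow> (\<forall>is x. dlist is f differentiable (at x))"

definition D0 :: "'n::finite test set" where
  "D0 = {\<phi>. smooth \<phi> \<and> bounded {x. \<phi> x \<noteq> 0}}"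

definition Rad :: "'n::finite test \<Rightarrow> real" where
  "Rad \<phi> = (if \<phi> = (\<lambda>_. 0) then 1 else Sup (norm ` {x. \<phi> x \<noteq> 0}))"

definition mono_pow :: "('n::finite \<Rightarrow> nat) \<Rightarrow> real ^ 'n \<Rightarrow> real" where
  "mono_pow \<alpha> x = (\<Prod>i\<in>UNIV. (x $ i) ^ \<alpha> i)"

definition Dn :: "nat \<Rightarrow> 'n::finite test set" where
  "Dn n = {\<phi> \<in> D0.
      (\<forall>x. Im (\<phi> x) = 0)
    \<and> (\<forall>x. \<phi> (- x) = \<phi> x)
    \<and> Rad \<phi> \<le> 1 / real n
    \<and> integral\<^sup>L lborel \<phi> = 1
    \<and> (\<forall>\<alpha>::'n \<Rightarrow> nat. 1 \<le> sum \<alpha> UNIV \<and> sum \<alpha> UNIV \<le> n \<longrightarrow>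
          integral\<^sup>L lborel (\<lambda>x. mono_pow \<alpha> x *\<^sub>R \<phi> x) = 0)
    \<and> integral\<^sup>L lborel (\<lambda>x. cmod (\<phi> x)) \<le> 1 + 1 / real n
    \<and> (\<forall>is. length is \<le> n \<longrightarrow>
          (\<forall>x. cmod (dlist is \<phi> x) \<le> inverse (Rad \<phi> ^ (2 * (length is + CARD('n))))))}"

definition ultrafilter_on :: "'a set \<Rightarrow> 'a set set \<Rightarrow> bool" where
  "ultrafilter_on X U \<longleftrightarrow>
     U \<subseteq> Pow X \<and> X \<in> U \<and> {} \<notin> U
   \<and> (\<forall>A B. A \<in> U \<and> A \<subseteq> B \<and> B \<subseteq> X \<longrightarrow> B \<in> U)
   \<and> (\<forall>A B. A \<in> U \<and> B \<in> U \<longrightarrow> A \<inter> B \<in> U)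
   \<and> (\<forall>A. A \<subseteq> X \<longrightarrow> A \<in> U \<or> X - A \<in> U)"

definition free_ultrafilter_on :: "'a set \<Rightarrow> 'a set set \<Rightarrow> bool" where
  "free_ultrafilter_on X U \<longleftrightarrow> ultrafilter_on X U \<and> (\<forall>x. {x} \<notin> U)"

text \<open>c^+-good (Keisler): for every index set J of cardinality at most c (here: J a set of
  reals) and every antitone map f from finite subsets of J into U there is a multiplicative
  refinement g.\<close>
definition cplus_good :: "'a set set \<Rightarrow> bool" where
  "cplus_good U \<longleftrightarrow>
    (\<forall>(J::real set) f.
       (\<forall>s. finite s \<and> s \<subseteq> J \<longrightarrow> f s \<in> U) \<and>
       (\<forall>s t. finite t \<and> t \<subseteq> J \<and> s \<subseteq> t \<longrightarrow> f t \<subseteq> f s) \<longrightarrow>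
       (\<exists>g. (\<forall>s. finite s \<and> s \<subseteq> J \<longrightarrow> g s \<in> U \<and> g s \<subseteq> f s) \<and>
            (\<forall>s t. finite s \<and> s \<subseteq> J \<and> finite t \<and> t \<subseteq> J \<longrightarrow> g (s \<union> t) = g s \<inter> g t)))"

definition ae :: "'n::finite test set set \<Rightarrow> ('n test \<Rightarrow> bool) \<Rightarrow> bool" where
  "ae U P \<longleftrightarrow> {\<phi> \<in> D0. P \<phi>} \<in> U"

definition moderate :: "'n::finite test set set \<Rightarrow> 'n net \<Rightarrow> bool" where
  "moderate U A \<longleftrightarrow> (\<exists>m::nat. ae U (\<lambda>\<phi>. cmod (A \<phi>) \<le> inverse (Rad \<phi> ^ m)))"

definition negligible :: "'n::finite test set set \<Rightarrow> 'n net \<Rightarrow> bool" where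
  "negligible U A \<longleftrightarrow> (\<forall>p::nat. ae U (\<lambda>\<phi>. cmod (A \<phi>) < Rad \<phi> ^ p))"

definition Mod :: "'n::finite test set set \<Rightarrow> 'n net set" where
  "Mod U = {A. moderate U A}"

definition gen_eq :: "'n::finite test set set \<Rightarrow> ('n net \<times> 'n net) set" where
  "gen_eq U = {(A, B). moderate U A \<and> moderate U B \<and> negligible U (\<lambda>\<phi>. A \<phi> - B \<phi>)}"

definition cls :: "'n::finite test set set \<Rightarrow> 'n net \<Rightarrow> 'n net set" where
  "cls U A = gen_eq U `` {A}"

definition Chat :: "'n::finite test set set \<Rightarrow> 'n net set set" where
  "Chat U = Mod U // gen_eq U"

definition Rhat :: "'n::finite test set set \<Rightarrow> 'n net set set" where
  "Rhat U = {c \<in> Chat U. \<exists>A \<in> c. \<forall>\<phi>. Im (A \<phi>) = 0}"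

definition rep :: "'n net set \<Rightarrow> 'n net" where
  "rep c = (SOME A. A \<in> c)"

definition gadd :: "'n::finite test set set \<Rightarrow> 'n net set \<Rightarrow> 'n net set \<Rightarrow> 'n net set" where
  "gadd U c d = cls U (\<lambda>\<phi>. rep c \<phi> + rep d \<phi>)"

definition gmult :: "'n::finite test set set \<Rightarrow> 'n net set \<Rightarrow> 'n net set \<Rightarrow> 'n net set" where
  "gmult U c d = cls U (\<lambda>\<phi>. rep c \<phi> * rep d \<phi>)"

definition CH :: "'n::finite test set set \<Rightarrow> 'n net set ring" where
  "CH U = \<lparr>carrier = Chat U, mult = gmult U, one = cls U (\<lambda>_. 1),
           zero = cls U (\<lambda>_. 0), add = gadd U\<rparr>"

definition RH :: "'n::finite test set set \<Rightarrow> 'n net set ring" where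
  "RH U = \<lparr>carrier = Rhat U, mult = gmult U, one = cls U (\<lambda>_. 1),
           zero = cls U (\<lambda>_. 0), add = gadd U\<rparr>"

definition gpos :: "'n::finite test set set \<Rightarrow> 'n net set \<Rightarrow> bool" where
  "gpos U c \<longleftrightarrow> c \<in> Rhat U \<and> c \<noteq> cls U (\<lambda>_. 0) \<and>
     (\<exists>A \<in> c. (\<forall>\<phi>. Im (A \<phi>) = 0) \<and> ae U (\<lambda>\<phi>. Re (A \<phi>) > 0))"

definition gless :: "'n::finite test set set \<Rightarrow> 'n net set \<Rightarrow> 'n net set \<Rightarrow> bool" where
  "gless U a b \<longleftrightarrow> gpos U (b \<ominus>\<^bsub>RH U\<^esub> a)"

definition gle :: "'n::finite test set set \<Rightarrow> 'n net set \<Rightarrow> 'n net set \<Rightarrow> bool" where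
  "gle U a b \<longleftrightarrow> a = b \<or> gless U a b"

definition totally_ordered_field :: "('a, 'b) ring_scheme \<Rightarrow> ('a \<Rightarrow> 'a \<Rightarrow> bool) \<Rightarrow> bool" where
  "totally_ordered_field R lq \<longleftrightarrow> field R
   \<and> (\<forall>a\<in>carrier R. lq a a)
   \<and> (\<forall>a\<in>carrier R. \<forall>b\<in>carrier R. lq a b \<and> lq b a \<longrightarrow> a = b)
   \<and> (\<forall>a\<in>carrier R. \<forall>b\<in>carrier R. \<forall>c\<in>carrier R. lq a b \<and> lq b c \<longrightarrow> lq a c)
   \<and> (\<forall>a\<in>carrier R. \<forall>b\<in>carrier R. lq a b \<or> lq b a)
   \<and> (\<forall>a\<in>carrier R. \<forall>b\<in>carrier R. \<forall>c\<in>carrier R. lq a b \<longrightarrow> lq (a \<oplus>\<^bsub>R\<^esub> c) (b \<oplus>\<^bsub>R\<^esub> c))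
   \<and> (\<forall>a\<in>carrier R. \<forall>b\<in>carrier R. lq \<zero>\<^bsub>R\<^esub> a \<and> lq \<zero>\<^bsub>R\<^esub> b \<longrightarrow> lq \<zero>\<^bsub>R\<^esub> (a \<otimes>\<^bsub>R\<^esub> b))"

definition gabs :: "'n::finite test set set \<Rightarrow> 'n net set \<Rightarrow> 'n net set" where
  "gabs U z = (THE c. c \<in> Rhat U \<and> gle U (cls U (\<lambda>_. 0)) c \<and>
      (\<exists>a\<in>Rhat U. \<exists>b\<in>Rhat U.
          z = gadd U a (gmult U (cls U (\<lambda>_. \<i>)) b) \<and>
          gmult U c c = gadd U (gmult U a a) (gmult U b b)))"

definition is_absolute_value ::
  "('a, 'b) ring_scheme \<Rightarrow> ('a, 'c) ring_scheme \<Rightarrow> ('a \<Rightarrow> 'a \<Rightarrow> bool) \<Rightarrow> ('a \<Rightarrow> 'a) \<Rightarrow> bool" where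
  "is_absolute_value S R lq f \<longleftrightarrow>
     (\<forall>x\<in>carrier S. f x \<in> carrier R \<and> lq \<zero>\<^bsub>R\<^esub> (f x))
   \<and> (\<forall>x\<in>carrier S. f x = \<zero>\<^bsub>R\<^esub> \<longleftrightarrow> x = \<zero>\<^bsub>S\<^esub>)
   \<and> (\<forall>x\<in>carrier S. \<forall>y\<in>carrier S. f (x \<otimes>\<^bsub>S\<^esub> y) = f x \<otimes>\<^bsub>R\<^esub> f y)
   \<and> (\<forall>x\<in>carrier S. \<forall>y\<in>carrier S. lq (f (x \<oplus>\<^bsub>S\<^esub> y)) (f x \<oplus>\<^bsub>R\<^esub> f y))"

end

theory Submission
  imports Defs
begin

text \<open>
  Along the ultrafilter \<open>U\<close> the radius \<open>Rad \<phi>\<close> tends to \<open>0\<close>, since \<open>U\<close> contains every \<open>Dn n\<close>.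
  A real-valued moderate net that is not negligible is therefore, along \<open>U\<close>, bounded below in
  absolute value by some power \<open>Rad \<phi> ^ p\<close>, and being an ultrafilter, \<open>U\<close> decides its sign.
  So a nonzero generalized real has a representative that is either \<open>\<ge> Rad \<phi> ^ p\<close> or
  \<open>\<le> - Rad \<phi> ^ p\<close> almost everywhere: it is invertible, and it is positive or negative. All
  ordered-field axioms then reduce to pointwise inequalities, a nonnegative class is the square of
  the class of the pointwise square root, and \<open>|a + i b|\<close> is the class of the pointwise modulus,
  from which the axioms of an absolute value are inherited.
\<close>

lemma Rad_pos_if_in_Dn:
  assumes "\<phi> \<in> Dn n"
  shows "0 < Rad \<phi>"
proof (rule ccontr)
  assume "\<not> 0 < Rad \<phi>"
  have D0: "\<phi> \<in> D0" and int1: "integral\<^sup>L lborel \<phi> = 1"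
    using assms unfolding Dn_def by auto
  then have nonzero: "\<phi> \<noteq> (\<lambda>_. 0)" by auto
  have "bounded {x. \<phi> x \<noteq> 0}" using D0 unfolding D0_def by auto
  then have bdd: "bdd_above (norm ` {x. \<phi> x \<noteq> 0})"
    by (auto simp: bounded_iff intro: bdd_aboveI2)
  have support: "x = 0" if "\<phi> x \<noteq> 0" for x
  proof -
    have "norm x \<le> Rad \<phi>"
      using nonzero that unfolding Rad_def by (auto intro: cSup_upper bdd)
    with \<open>\<not> 0 < Rad \<phi>\<close> have "norm x \<le> 0" by linarith
    then show "x = 0" by simp
  qed
  have "AE x in lborel. \<phi> x = 0"
    using AE_lborel_singleton[of 0] by eventually_elim (use support in auto)
  then have "integral\<^sup>L lborel \<phi> = 0" by (rule integral_eq_zero_AE)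
  with int1 show False by simp
qed

lemma inverse_power_le_inverse_power:
  fixes r :: real
  assumes "0 < r" "r \<le> 1" "m \<le> k"
  shows "inverse (r ^ m) \<le> inverse (r ^ k)"
  using assms by (intro le_imp_inverse_le power_decreasing) auto

lemma two_inverse_power_le:
  fixes r :: real
  assumes "0 < r" "r \<le> 1/2"
  shows "2 * inverse (r ^ m) \<le> inverse (r ^ Suc m)"
proof -
  have "2 \<le> inverse r" using assms by (simp add: field_simps)
  then show ?thesis using assms by (simp add: mult_right_mono)
qed

lemma sqrt_le_one_plus:
  assumes "0 \<le> (t::real)"
  shows "sqrt t \<le> 1 + t"
proof -
  have "t \<le> (1 + t)\<^sup>2" using assms by (simp add: power2_eq_square algebra_simps)
  then have "sqrt t \<le> sqrt ((1 + t)\<^sup>2)" by (rule real_sqrt_le_mono)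
  then show ?thesis using assms by simp
qed

lemma two_power_Suc_le:
  fixes r :: real
  assumes "0 < r" "r \<le> 1/2"
  shows "2 * r ^ Suc p \<le> r ^ p"
  using mult_right_mono[of "2 * r" 1 "r ^ p"] assms by (simp add: algebra_simps)

definition real_net :: "'n net \<Rightarrow> bool" where
  "real_net A \<longleftrightarrow> (\<forall>\<phi>. Im (A \<phi>) = 0)"

lemma real_net_add: "real_net A \<Longrightarrow> real_net B \<Longrightarrow> real_net (\<lambda>\<phi>. A \<phi> + B \<phi>)"
  and real_net_mult: "real_net A \<Longrightarrow> real_net B \<Longrightarrow> real_net (\<lambda>\<phi>. A \<phi> * B \<phi>)"
  and real_net_uminus: "real_net A \<Longrightarrow> real_net (\<lambda>\<phi>. - A \<phi>)"
  and real_net_diff: "real_net A \<Longrightarrow> real_net B \<Longrightarrow> real_net (\<lambda>\<phi>. A \<phi> - B \<phi>)"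
  and real_net_const: "Im c = 0 \<Longrightarrow> real_net (\<lambda>_. c)"
  and real_net_of_real: "real_net (\<lambda>\<phi>. complex_of_real (f \<phi>))"
  unfolding real_net_def by simp_all

lemmas real_net_intros =
  real_net_add real_net_mult real_net_uminus real_net_diff real_net_const real_net_of_real

lemma real_net_inverse: "real_net A \<Longrightarrow> real_net (\<lambda>\<phi>. inverse (A \<phi>))"
  unfolding real_net_def by (simp add: complex_is_Real_iff)

lemma real_net_cmod: "real_net A \<Longrightarrow> cmod (A \<phi>) = \<bar>Re (A \<phi>)\<bar>"
  unfolding real_net_def by (simp add: cmod_eq_Re)

lemma real_net_of_Re: "real_net A \<Longrightarrow> complex_of_real (Re (A \<phi>)) = A \<phi>"
  unfolding real_net_def by (simp add: complex_eq_iff)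

definition Re_net :: "'n net \<Rightarrow> 'n net" where
  "Re_net Z = (\<lambda>\<phi>. complex_of_real (Re (Z \<phi>)))"

definition Im_net :: "'n net \<Rightarrow> 'n net" where
  "Im_net Z = (\<lambda>\<phi>. complex_of_real (Im (Z \<phi>)))"

definition norm_net :: "'n net \<Rightarrow> 'n net" where
  "norm_net Z = (\<lambda>\<phi>. complex_of_real (cmod (Z \<phi>)))"

lemma real_net_norm_net: "real_net (norm_net Z)"
  and real_net_Re_net: "real_net (Re_net Z)"
  and real_net_Im_net: "real_net (Im_net Z)"
  unfolding norm_net_def Re_net_def Im_net_def by (rule real_net_of_real)+

locale generalized_numbers =
  fixes U :: "('n::finite) test set set"
  assumes ultrafilter: "ultrafilter_on D0 U"
    and Dn_in_U: "\<And>n. n \<ge> 1 \<Longrightarrow> Dn n \<in> U"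
begin

lemma U_upward: "A \<in> U \<Longrightarrow> A \<subseteq> B \<Longrightarrow> B \<subseteq> D0 \<Longrightarrow> B \<in> U"
  and U_Int: "A \<in> U \<Longrightarrow> B \<in> U \<Longrightarrow> A \<inter> B \<in> U"
  and U_D0: "D0 \<in> U"
  and U_empty: "{} \<notin> U"
  and U_ultra: "A \<subseteq> D0 \<Longrightarrow> A \<in> U \<or> D0 - A \<in> U"
  using ultrafilter unfolding ultrafilter_on_def by blast+

definition UF :: "'n test filter" where
  "UF = Abs_filter (ae U)"

lemma eventually_UF: "eventually P UF \<longleftrightarrow> ae U P"
proof -
  have "is_filter (ae U)"
  proof
    show "ae U (\<lambda>_. True)" using U_D0 unfolding ae_def by simp
  next
    fix P Q assume "ae U P" "ae U Q"
    then have "{\<phi> \<in> D0. P \<phi>} \<inter> {\<phi> \<in> D0. Q \<phi>} \<in> U" unfolding ae_def by (rule U_Int)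
    moreover have "{\<phi> \<in> D0. P \<phi>} \<inter> {\<phi> \<in> D0. Q \<phi>} = {\<phi> \<in> D0. P \<phi> \<and> Q \<phi>}" by auto
    ultimately show "ae U (\<lambda>\<phi>. P \<phi> \<and> Q \<phi>)" unfolding ae_def by simp
  next
    fix P Q assume "\<forall>\<phi>. P \<phi> \<longrightarrow> Q \<phi>" "ae U P"
    then show "ae U Q" unfolding ae_def by (elim U_upward) auto
  qed
  then show ?thesis unfolding UF_def by (rule eventually_Abs_filter)
qed

lemma UF_neq_bot: "UF \<noteq> bot"
  using U_empty eventually_False[of UF] unfolding eventually_UF ae_def by auto

lemma eventually_or_eventually_not: "eventually P UF \<or> eventually (\<lambda>\<phi>. \<not> P \<phi>) UF"
proof -
  have "{\<phi> \<in> D0. P \<phi>} \<in> U \<or> D0 - {\<phi> \<in> D0. P \<phi>} \<in> U" by (rule U_ultra) blast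
  moreover have "D0 - {\<phi> \<in> D0. P \<phi>} = {\<phi> \<in> D0. \<not> P \<phi>}" by blast
  ultimately show ?thesis unfolding eventually_UF ae_def by auto
qed

lemma eventually_Rad_le:
  assumes "n \<ge> 1"
  shows "\<forall>\<^sub>F \<phi> in UF. 0 < Rad \<phi> \<and> Rad \<phi> \<le> 1 / real n"
proof -
  have "Dn n \<subseteq> {\<phi> \<in> D0. 0 < Rad \<phi> \<and> Rad \<phi> \<le> 1 / real n}"
    using Rad_pos_if_in_Dn unfolding Dn_def by auto
  then show ?thesis unfolding eventually_UF ae_def by (rule U_upward[OF Dn_in_U[OF assms]]) blast
qed

lemma eventually_Rad_small: "\<forall>\<^sub>F \<phi> in UF. 0 < Rad \<phi> \<and> Rad \<phi> \<le> 1/2"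
  using eventually_Rad_le[of 2] by simp

lemma eventually_Rad_power_pos: "\<forall>\<^sub>F \<phi> in UF. 0 < Rad \<phi> ^ p"
  using eventually_Rad_small by eventually_elim simp

section \<open>Moderate and negligible nets\<close>

lemma moderate_iff: "moderate U A \<longleftrightarrow> (\<exists>m. \<forall>\<^sub>F \<phi> in UF. cmod (A \<phi>) \<le> inverse (Rad \<phi> ^ m))"
  unfolding moderate_def eventually_UF ..

lemma negligible_iff: "negligible U A \<longleftrightarrow> (\<forall>p. \<forall>\<^sub>F \<phi> in UF. cmod (A \<phi>) < Rad \<phi> ^ p)"
  unfolding negligible_def eventually_UF ..

lemma moderate_bound_mono:
  assumes "moderate U A" "\<forall>\<^sub>F \<phi> in UF. cmod (B \<phi>) \<le> cmod (A \<phi>)"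
  shows "moderate U B"
proof -
  obtain m where "\<forall>\<^sub>F \<phi> in UF. cmod (A \<phi>) \<le> inverse (Rad \<phi> ^ m)"
    using assms(1) unfolding moderate_iff by blast
  with assms(2) have "\<forall>\<^sub>F \<phi> in UF. cmod (B \<phi>) \<le> inverse (Rad \<phi> ^ m)"
    by eventually_elim auto
  then show ?thesis unfolding moderate_iff by blast
qed

lemma negligible_bound_mono:
  assumes "negligible U A" "\<forall>\<^sub>F \<phi> in UF. cmod (B \<phi>) \<le> cmod (A \<phi>)"
  shows "negligible U B"
  unfolding negligible_iff
proof
  fix p
  have "\<forall>\<^sub>F \<phi> in UF. cmod (A \<phi>) < Rad \<phi> ^ p" using assms(1) unfolding negligible_iff by blast
  with assms(2) show "\<forall>\<^sub>F \<phi> in UF. cmod (B \<phi>) < Rad \<phi> ^ p" by eventually_elim auto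
qed

lemma moderate_const: "moderate U (\<lambda>_. c)"
proof -
  define n where "n = nat \<lceil>cmod c\<rceil> + 1"
  have "n \<ge> 1" and c_le: "cmod c \<le> real n" unfolding n_def by linarith+
  from eventually_Rad_le[OF this(1)]
  have "\<forall>\<^sub>F \<phi> in UF. cmod c \<le> inverse (Rad \<phi> ^ 1)"
  proof eventually_elim
    case (elim \<phi>)
    then have "real n \<le> inverse (Rad \<phi>)" using \<open>n \<ge> 1\<close> by (simp add: field_simps)
    then show ?case using c_le by simp
  qed
  then show ?thesis unfolding moderate_iff by blast
qed

lemma moderate_add:
  assumes "moderate U A" "moderate U B"
  shows "moderate U (\<lambda>\<phi>. A \<phi> + B \<phi>)"
proof -
  obtain m k where
    "\<forall>\<^sub>F \<phi> in UF. cmod (A \<phi>) \<le> inverse (Rad \<phi> ^ m)"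
    "\<forall>\<^sub>F \<phi> in UF. cmod (B \<phi>) \<le> inverse (Rad \<phi> ^ k)"
    using assms unfolding moderate_iff by blast
  with eventually_Rad_small
  have "\<forall>\<^sub>F \<phi> in UF. cmod (A \<phi> + B \<phi>) \<le> inverse (Rad \<phi> ^ Suc (m + k))"
  proof eventually_elim
    case (elim \<phi>)
    have "inverse (Rad \<phi> ^ m) \<le> inverse (Rad \<phi> ^ (m + k))"
      "inverse (Rad \<phi> ^ k) \<le> inverse (Rad \<phi> ^ (m + k))"
      using elim by (auto intro: inverse_power_le_inverse_power)
    moreover have "2 * inverse (Rad \<phi> ^ (m + k)) \<le> inverse (Rad \<phi> ^ Suc (m + k))"
      using elim by (intro two_inverse_power_le) auto
    moreover have "cmod (A \<phi> + B \<phi>) \<le> cmod (A \<phi>) + cmod (B \<phi>)" by (rule norm_triangle_ineq)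
    ultimately show ?case using elim by linarith
  qed
  then show ?thesis unfolding moderate_iff by blast
qed

lemma moderate_mult:
  assumes "moderate U A" "moderate U B"
  shows "moderate U (\<lambda>\<phi>. A \<phi> * B \<phi>)"
proof -
  obtain m k where
    "\<forall>\<^sub>F \<phi> in UF. cmod (A \<phi>) \<le> inverse (Rad \<phi> ^ m)"
    "\<forall>\<^sub>F \<phi> in UF. cmod (B \<phi>) \<le> inverse (Rad \<phi> ^ k)"
    using assms unfolding moderate_iff by blast
  with eventually_Rad_small
  have "\<forall>\<^sub>F \<phi> in UF. cmod (A \<phi> * B \<phi>) \<le> inverse (Rad \<phi> ^ (m + k))"
  proof eventually_elim
    case (elim \<phi>)
    then have "cmod (A \<phi>) * cmod (B \<phi>) \<le> inverse (Rad \<phi> ^ m) * inverse (Rad \<phi> ^ k)"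
      by (intro mult_mono) auto
    then show ?case by (simp add: norm_mult power_add)
  qed
  then show ?thesis unfolding moderate_iff by blast
qed

lemma moderate_uminus: "moderate U A \<Longrightarrow> moderate U (\<lambda>\<phi>. - A \<phi>)"
  by (erule moderate_bound_mono) simp

lemma moderate_diff: "moderate U A \<Longrightarrow> moderate U B \<Longrightarrow> moderate U (\<lambda>\<phi>. A \<phi> - B \<phi>)"
  using moderate_add[of A "\<lambda>\<phi>. - B \<phi>"] moderate_uminus[of B] by simp

lemmas moderate_intros = moderate_add moderate_mult moderate_const moderate_uminus moderate_diff

lemma negligible_zero: "negligible U (\<lambda>_. 0)"
  unfolding negligible_iff
proof
  fix p show "\<forall>\<^sub>F \<phi> in UF. cmod 0 < Rad \<phi> ^ p"
    using eventually_Rad_small by eventually_elim simp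
qed

lemma negligible_add:
  assumes "negligible U A" "negligible U B"
  shows "negligible U (\<lambda>\<phi>. A \<phi> + B \<phi>)"
  unfolding negligible_iff
proof
  fix p
  have "\<forall>\<^sub>F \<phi> in UF. cmod (A \<phi>) < Rad \<phi> ^ Suc p" "\<forall>\<^sub>F \<phi> in UF. cmod (B \<phi>) < Rad \<phi> ^ Suc p"
    using assms unfolding negligible_iff by blast+
  with eventually_Rad_small show "\<forall>\<^sub>F \<phi> in UF. cmod (A \<phi> + B \<phi>) < Rad \<phi> ^ p"
  proof eventually_elim
    case (elim \<phi>)
    have "2 * Rad \<phi> ^ Suc p \<le> Rad \<phi> ^ p" using elim by (intro two_power_Suc_le) auto
    moreover have "cmod (A \<phi> + B \<phi>) \<le> cmod (A \<phi>) + cmod (B \<phi>)" by (rule norm_triangle_ineq)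
    ultimately show ?case using elim by linarith
  qed
qed

lemma negligible_uminus: "negligible U A \<Longrightarrow> negligible U (\<lambda>\<phi>. - A \<phi>)"
  by (erule negligible_bound_mono) simp

lemma negligible_diff: "negligible U A \<Longrightarrow> negligible U B \<Longrightarrow> negligible U (\<lambda>\<phi>. A \<phi> - B \<phi>)"
  using negligible_add[of A "\<lambda>\<phi>. - B \<phi>"] negligible_uminus[of B] by simp

lemma negligible_diff_commute: "negligible U (\<lambda>\<phi>. A \<phi> - B \<phi>) \<longleftrightarrow> negligible U (\<lambda>\<phi>. B \<phi> - A \<phi>)"
  using negligible_uminus[of "\<lambda>\<phi>. A \<phi> - B \<phi>"] negligible_uminus[of "\<lambda>\<phi>. B \<phi> - A \<phi>"] by auto

lemma negligible_mult_moderate: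
  assumes "negligible U A" "moderate U B"
  shows "negligible U (\<lambda>\<phi>. A \<phi> * B \<phi>)"
  unfolding negligible_iff
proof
  fix p
  obtain m where "\<forall>\<^sub>F \<phi> in UF. cmod (B \<phi>) \<le> inverse (Rad \<phi> ^ m)"
    using assms(2) unfolding moderate_iff by blast
  moreover have "\<forall>\<^sub>F \<phi> in UF. cmod (A \<phi>) < Rad \<phi> ^ (p + m)"
    using assms(1) unfolding negligible_iff by blast
  ultimately show "\<forall>\<^sub>F \<phi> in UF. cmod (A \<phi> * B \<phi>) < Rad \<phi> ^ p"
    using eventually_Rad_small
  proof eventually_elim
    case (elim \<phi>)
    then have "cmod (A \<phi>) * cmod (B \<phi>) \<le> cmod (A \<phi>) * inverse (Rad \<phi> ^ m)"
      by (intro mult_left_mono) auto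
    also have "\<dots> < Rad \<phi> ^ (p + m) * inverse (Rad \<phi> ^ m)"
      using elim by (intro mult_strict_right_mono) auto
    also have "\<dots> = Rad \<phi> ^ p" using elim by (simp add: power_add)
    finally show ?case by (simp add: norm_mult)
  qed
qed

lemma not_negligibleE:
  assumes "\<not> negligible U A"
  obtains p where "\<forall>\<^sub>F \<phi> in UF. Rad \<phi> ^ p \<le> cmod (A \<phi>)"
proof -
  obtain p where "\<not> (\<forall>\<^sub>F \<phi> in UF. cmod (A \<phi>) < Rad \<phi> ^ p)"
    using assms unfolding negligible_iff by blast
  then have "\<forall>\<^sub>F \<phi> in UF. Rad \<phi> ^ p \<le> cmod (A \<phi>)"
    using eventually_or_eventually_not[of "\<lambda>\<phi>. cmod (A \<phi>) < Rad \<phi> ^ p"]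
    by (simp add: not_less)
  then show ?thesis using that by blast
qed

lemma one_not_negligible: "\<not> negligible U (\<lambda>_. 1)"
proof
  assume "negligible U (\<lambda>_. 1)"
  then have "\<forall>\<^sub>F \<phi> in UF. cmod 1 < Rad \<phi> ^ 1" unfolding negligible_iff ..
  with eventually_Rad_small have "\<forall>\<^sub>F \<phi> in UF. False" by eventually_elim auto
  with UF_neq_bot show False by (simp add: eventually_False)
qed

section \<open>The field of generalized reals\<close>

lemma mem_cls_iff: "B \<in> cls U A \<longleftrightarrow> moderate U A \<and> moderate U B \<and> negligible U (\<lambda>\<phi>. A \<phi> - B \<phi>)"
  by (simp add: cls_def gen_eq_def)

lemma cls_self: "moderate U A \<Longrightarrow> A \<in> cls U A"
  unfolding mem_cls_iff by (simp add: negligible_zero)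

lemma cls_eq_iff:
  assumes "moderate U A" "moderate U B"
  shows "cls U A = cls U B \<longleftrightarrow> negligible U (\<lambda>\<phi>. A \<phi> - B \<phi>)"
proof
  assume "cls U A = cls U B"
  then have "A \<in> cls U B" using cls_self[OF assms(1)] by simp
  then show "negligible U (\<lambda>\<phi>. A \<phi> - B \<phi>)"
    unfolding mem_cls_iff using negligible_diff_commute by blast
next
  assume AB: "negligible U (\<lambda>\<phi>. A \<phi> - B \<phi>)"
  have "negligible U (\<lambda>\<phi>. A \<phi> - C \<phi>) \<longleftrightarrow> negligible U (\<lambda>\<phi>. B \<phi> - C \<phi>)" for C
    using negligible_add[OF AB, of "\<lambda>\<phi>. B \<phi> - C \<phi>"]
      negligible_diff[of "\<lambda>\<phi>. A \<phi> - C \<phi>" "\<lambda>\<phi>. A \<phi> - B \<phi>", OF _ AB]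
    by auto
  then show "cls U A = cls U B" using assms unfolding set_eq_iff mem_cls_iff by blast
qed

lemma cls_eq_zero_iff: "moderate U A \<Longrightarrow> cls U A = cls U (\<lambda>_. 0) \<longleftrightarrow> negligible U A"
  by (simp add: cls_eq_iff moderate_const)

lemma rep_cls:
  assumes "moderate U A"
  shows "moderate U (rep (cls U A))" "negligible U (\<lambda>\<phi>. rep (cls U A) \<phi> - A \<phi>)"
proof -
  have "rep (cls U A) \<in> cls U A"
    unfolding rep_def using cls_self[OF assms] by (rule someI[where P = "\<lambda>B. B \<in> cls U A"])
  then show "moderate U (rep (cls U A))" "negligible U (\<lambda>\<phi>. rep (cls U A) \<phi> - A \<phi>)"
    unfolding mem_cls_iff using negligible_diff_commute by blast+
qed

lemma gadd_cls:
  assumes "moderate U A" "moderate U B"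
  shows "gadd U (cls U A) (cls U B) = cls U (\<lambda>\<phi>. A \<phi> + B \<phi>)"
proof -
  note a = rep_cls[OF assms(1)] and b = rep_cls[OF assms(2)]
  have "negligible U (\<lambda>\<phi>. (rep (cls U A) \<phi> + rep (cls U B) \<phi>) - (A \<phi> + B \<phi>))"
    using negligible_add[OF a(2) b(2)] by (simp add: algebra_simps)
  then show ?thesis
    unfolding gadd_def using a b assms by (simp add: cls_eq_iff moderate_add)
qed

lemma gmult_cls:
  assumes "moderate U A" "moderate U B"
  shows "gmult U (cls U A) (cls U B) = cls U (\<lambda>\<phi>. A \<phi> * B \<phi>)"
proof -
  note a = rep_cls[OF assms(1)] and b = rep_cls[OF assms(2)]
  have "negligible U (\<lambda>\<phi>. (rep (cls U B) \<phi> - B \<phi>) * rep (cls U A) \<phi> + (rep (cls U A) \<phi> - A \<phi>) * B \<phi>)"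
    using negligible_add[OF negligible_mult_moderate[OF b(2) a(1)] negligible_mult_moderate[OF a(2) assms(2)]] .
  then have "negligible U (\<lambda>\<phi>. rep (cls U A) \<phi> * rep (cls U B) \<phi> - A \<phi> * B \<phi>)"
    by (simp add: algebra_simps)
  then show ?thesis
    unfolding gmult_def using a b assms by (simp add: cls_eq_iff moderate_mult)
qed

lemma Chat_iff: "c \<in> Chat U \<longleftrightarrow> (\<exists>A. moderate U A \<and> c = cls U A)"
  unfolding Chat_def quotient_def Mod_def cls_def by blast

lemma Rhat_iff: "c \<in> Rhat U \<longleftrightarrow> (\<exists>A. moderate U A \<and> real_net A \<and> c = cls U A)"
proof
  assume "c \<in> Rhat U"
  then obtain A0 A where A0: "moderate U A0" "c = cls U A0" and A: "A \<in> c" "real_net A"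
    unfolding Rhat_def Chat_iff real_net_def by blast
  then have "moderate U A" "negligible U (\<lambda>\<phi>. A0 \<phi> - A \<phi>)" by (auto simp: mem_cls_iff)
  then have "c = cls U A" using A0 cls_eq_iff by simp
  with A \<open>moderate U A\<close> show "\<exists>A. moderate U A \<and> real_net A \<and> c = cls U A" by blast
next
  assume "\<exists>A. moderate U A \<and> real_net A \<and> c = cls U A"
  then show "c \<in> Rhat U" unfolding Rhat_def Chat_iff real_net_def using cls_self by blast
qed

lemma cls_in_Rhat: "moderate U A \<Longrightarrow> real_net A \<Longrightarrow> cls U A \<in> Rhat U"
  using Rhat_iff by blast

lemma ChatE:
  assumes "c \<in> Chat U"
  obtains A where "moderate U A" "c = cls U A"
  using assms Chat_iff by blast

lemma RhatE:
  assumes "c \<in> Rhat U"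
  obtains A where "moderate U A" "real_net A" "c = cls U A"
  using assms Rhat_iff by blast

lemma RH_simps [simp]:
  "carrier (RH U) = Rhat U" "mult (RH U) = gmult U" "one (RH U) = cls U (\<lambda>_. 1)"
  "zero (RH U) = cls U (\<lambda>_. 0)" "add (RH U) = gadd U"
  by (simp_all add: RH_def)

lemma CH_simps [simp]:
  "carrier (CH U) = Chat U" "mult (CH U) = gmult U" "one (CH U) = cls U (\<lambda>_. 1)"
  "zero (CH U) = cls U (\<lambda>_. 0)" "add (CH U) = gadd U"
  by (simp_all add: CH_def)

lemma abelian_group_RH: "abelian_group (RH U)"
proof (rule abelian_groupI)
  fix x assume "x \<in> carrier (RH U)"
  then obtain A where A: "moderate U A" "real_net A" "x = cls U A" by (auto elim: RhatE)
  then have "cls U (\<lambda>\<phi>. - A \<phi>) \<in> carrier (RH U) \<and> cls U (\<lambda>\<phi>. - A \<phi>) \<oplus>\<^bsub>RH U\<^esub> x = \<zero>\<^bsub>RH U\<^esub>"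
    by (simp add: gadd_cls cls_in_Rhat moderate_intros real_net_intros)
  then show "\<exists>y\<in>carrier (RH U). y \<oplus>\<^bsub>RH U\<^esub> x = \<zero>\<^bsub>RH U\<^esub>" by blast
qed (auto elim!: RhatE simp: gadd_cls moderate_intros add_ac intro!: cls_in_Rhat real_net_intros)

lemma comm_monoid_RH: "comm_monoid (RH U)"
  by (rule comm_monoidI)
    (auto elim!: RhatE simp: gmult_cls moderate_intros mult_ac intro!: cls_in_Rhat real_net_intros)

lemma cring_RH: "cring (RH U)"
  by (rule cringI[OF abelian_group_RH comm_monoid_RH])
    (auto elim!: RhatE simp: gmult_cls gadd_cls moderate_intros distrib_right)

lemma field_RH: "field (RH U)"
proof (rule cring.cring_fieldI2[OF cring_RH])
  show "\<zero>\<^bsub>RH U\<^esub> \<noteq> \<one>\<^bsub>RH U\<^esub>"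
    using cls_eq_zero_iff[OF moderate_const] one_not_negligible by auto
next
  fix a assume a: "a \<in> carrier (RH U)" "a \<noteq> \<zero>\<^bsub>RH U\<^esub>"
  then obtain A where A: "moderate U A" "real_net A" "a = cls U A" by (auto elim: RhatE)
  then have "\<not> negligible U A" using a cls_eq_zero_iff by auto
  then obtain p where p: "\<forall>\<^sub>F \<phi> in UF. Rad \<phi> ^ p \<le> cmod (A \<phi>)"
    by (rule not_negligibleE)
  define B where "B = (\<lambda>\<phi>. inverse (A \<phi>))"
  from p eventually_Rad_power_pos[of p]
  have "\<forall>\<^sub>F \<phi> in UF. A \<phi> \<noteq> 0 \<and> cmod (B \<phi>) \<le> inverse (Rad \<phi> ^ p)"
  proof eventually_elim
    case (elim \<phi>)
    then have "0 < cmod (A \<phi>)" by linarith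
    with elim show ?case unfolding B_def by (simp add: norm_inverse le_imp_inverse_le)
  qed
  then have "moderate U B" and "negligible U (\<lambda>\<phi>. A \<phi> * B \<phi> - 1)"
    by (auto simp: moderate_iff B_def intro!: negligible_bound_mono[OF negligible_zero] elim: eventually_mono)
  then have "cls U B \<in> carrier (RH U)" "a \<otimes>\<^bsub>RH U\<^esub> cls U B = \<one>\<^bsub>RH U\<^esub>"
    using A unfolding B_def by (simp_all add: gmult_cls cls_eq_iff moderate_intros cls_in_Rhat real_net_inverse)
  then show "\<exists>b\<in>carrier (RH U). a \<otimes>\<^bsub>RH U\<^esub> b = \<one>\<^bsub>RH U\<^esub>" by blast
qed

lemma RH_minus_cls:
  assumes "moderate U A" "real_net A" "moderate U B" "real_net B"
  shows "cls U B \<ominus>\<^bsub>RH U\<^esub> cls U A = cls U (\<lambda>\<phi>. B \<phi> - A \<phi>)"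
proof -
  interpret abelian_group "RH U" by (rule abelian_group_RH)
  have "\<ominus>\<^bsub>RH U\<^esub> cls U A = cls U (\<lambda>\<phi>. - A \<phi>)"
    by (rule minus_equality)
      (use assms in \<open>auto simp: gadd_cls moderate_intros intro!: cls_in_Rhat real_net_intros\<close>)
  then show ?thesis unfolding a_minus_def using assms by (simp add: gadd_cls moderate_intros)
qed

section \<open>The order\<close>

definition strictly_pos :: "'n net \<Rightarrow> bool" where
  "strictly_pos A \<longleftrightarrow> (\<exists>p. \<forall>\<^sub>F \<phi> in UF. Rad \<phi> ^ p \<le> Re (A \<phi>))"

definition nonneg_net :: "'n net \<Rightarrow> bool" where
  "nonneg_net A \<longleftrightarrow> negligible U A \<or> strictly_pos A"

lemma strictly_pos_imp_not_negligible:
  assumes "strictly_pos A"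
  shows "\<not> negligible U A"
proof
  obtain p where "\<forall>\<^sub>F \<phi> in UF. Rad \<phi> ^ p \<le> Re (A \<phi>)"
    using assms unfolding strictly_pos_def by blast
  moreover assume "negligible U A"
  then have "\<forall>\<^sub>F \<phi> in UF. cmod (A \<phi>) < Rad \<phi> ^ p" unfolding negligible_iff ..
  ultimately have "\<forall>\<^sub>F \<phi> in UF. False"
  proof eventually_elim
    case (elim \<phi>)
    with complex_Re_le_cmod[of "A \<phi>"] show ?case by linarith
  qed
  with UF_neq_bot show False by (simp add: eventually_False)
qed

lemma strictly_pos_negligible_perturb:
  assumes "strictly_pos A" "negligible U (\<lambda>\<phi>. A \<phi> - B \<phi>)"
  shows "strictly_pos B"
proof -
  obtain p where "\<forall>\<^sub>F \<phi> in UF. Rad \<phi> ^ p \<le> Re (A \<phi>)"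
    using assms(1) unfolding strictly_pos_def by blast
  moreover have "\<forall>\<^sub>F \<phi> in UF. cmod (A \<phi> - B \<phi>) < Rad \<phi> ^ Suc p"
    using assms(2) unfolding negligible_iff ..
  ultimately have "\<forall>\<^sub>F \<phi> in UF. Rad \<phi> ^ Suc p \<le> Re (B \<phi>)"
    using eventually_Rad_small
  proof eventually_elim
    case (elim \<phi>)
    have "2 * Rad \<phi> ^ Suc p \<le> Rad \<phi> ^ p" using elim by (intro two_power_Suc_le) auto
    moreover have "Re (A \<phi>) - Re (B \<phi>) \<le> cmod (A \<phi> - B \<phi>)"
      using complex_Re_le_cmod[of "A \<phi> - B \<phi>"] by simp
    ultimately show ?case using elim by linarith
  qed
  then show ?thesis unfolding strictly_pos_def by blast
qed

lemma strictly_pos_add: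
  assumes "strictly_pos A" "strictly_pos B"
  shows "strictly_pos (\<lambda>\<phi>. A \<phi> + B \<phi>)"
proof -
  obtain p q where "\<forall>\<^sub>F \<phi> in UF. Rad \<phi> ^ p \<le> Re (A \<phi>)" "\<forall>\<^sub>F \<phi> in UF. Rad \<phi> ^ q \<le> Re (B \<phi>)"
    using assms unfolding strictly_pos_def by blast
  with eventually_Rad_power_pos[of q] have "\<forall>\<^sub>F \<phi> in UF. Rad \<phi> ^ p \<le> Re (A \<phi> + B \<phi>)"
  proof eventually_elim
    case (elim \<phi>)
    have "Re (A \<phi> + B \<phi>) = Re (A \<phi>) + Re (B \<phi>)" by simp
    with elim show ?case by linarith
  qed
  then show ?thesis unfolding strictly_pos_def by blast
qed

lemma strictly_pos_mult:
  assumes "strictly_pos A" "strictly_pos B" "real_net A" "real_net B"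
  shows "strictly_pos (\<lambda>\<phi>. A \<phi> * B \<phi>)"
proof -
  obtain p q where "\<forall>\<^sub>F \<phi> in UF. Rad \<phi> ^ p \<le> Re (A \<phi>)" "\<forall>\<^sub>F \<phi> in UF. Rad \<phi> ^ q \<le> Re (B \<phi>)"
    using assms unfolding strictly_pos_def by blast
  with eventually_Rad_power_pos[of p] eventually_Rad_power_pos[of q]
  have "\<forall>\<^sub>F \<phi> in UF. Rad \<phi> ^ (p + q) \<le> Re (A \<phi> * B \<phi>)"
  proof eventually_elim
    case (elim \<phi>)
    then have "Rad \<phi> ^ p * Rad \<phi> ^ q \<le> Re (A \<phi>) * Re (B \<phi>)" by (intro mult_mono) auto
    then show ?case using assms(3,4) unfolding real_net_def by (simp add: power_add)
  qed
  then show ?thesis unfolding strictly_pos_def by blast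
qed

lemma not_strictly_pos_uminus:
  assumes "strictly_pos A"
  shows "\<not> strictly_pos (\<lambda>\<phi>. - A \<phi>)"
proof
  assume "strictly_pos (\<lambda>\<phi>. - A \<phi>)"
  with assms have "strictly_pos (\<lambda>\<phi>. A \<phi> + - A \<phi>)" by (rule strictly_pos_add)
  then show False using strictly_pos_imp_not_negligible negligible_zero by simp
qed

lemma strictly_pos_or_uminus:
  assumes "real_net A" "\<not> negligible U A"
  shows "strictly_pos A \<or> strictly_pos (\<lambda>\<phi>. - A \<phi>)"
proof -
  obtain p where p: "\<forall>\<^sub>F \<phi> in UF. Rad \<phi> ^ p \<le> cmod (A \<phi>)"
    using assms(2) by (rule not_negligibleE)
  have either: "\<forall>\<^sub>F \<phi> in UF. Rad \<phi> ^ p \<le> Re (A \<phi>) \<or> Rad \<phi> ^ p \<le> Re (- A \<phi>)"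
    using p by eventually_elim (auto simp: real_net_cmod[OF assms(1)] abs_if split: if_splits)
  consider "\<forall>\<^sub>F \<phi> in UF. Rad \<phi> ^ p \<le> Re (A \<phi>)" | "\<forall>\<^sub>F \<phi> in UF. \<not> Rad \<phi> ^ p \<le> Re (A \<phi>)"
    using eventually_or_eventually_not by blast
  then show ?thesis
  proof cases
    case 1
    then show ?thesis unfolding strictly_pos_def by blast
  next
    case 2
    with either have "\<forall>\<^sub>F \<phi> in UF. Rad \<phi> ^ p \<le> Re (- A \<phi>)" by eventually_elim blast
    then show ?thesis unfolding strictly_pos_def by blast
  qed
qed

lemma strictly_pos_add_negligible:
  assumes "strictly_pos A" "negligible U B"
  shows "strictly_pos (\<lambda>\<phi>. A \<phi> + B \<phi>)" "strictly_pos (\<lambda>\<phi>. B \<phi> + A \<phi>)"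
proof -
  show "strictly_pos (\<lambda>\<phi>. A \<phi> + B \<phi>)"
    using strictly_pos_negligible_perturb[OF assms(1), of "\<lambda>\<phi>. A \<phi> + B \<phi>"] negligible_uminus[OF assms(2)]
    by simp
  then show "strictly_pos (\<lambda>\<phi>. B \<phi> + A \<phi>)" by (simp add: add.commute)
qed

lemma nonneg_net_add:
  assumes "nonneg_net A" "nonneg_net B"
  shows "nonneg_net (\<lambda>\<phi>. A \<phi> + B \<phi>)"
  using assms unfolding nonneg_net_def
  by (elim disjE) (simp_all add: negligible_add strictly_pos_add strictly_pos_add_negligible)

lemma nonneg_net_mult:
  assumes "nonneg_net A" "nonneg_net B" "moderate U A" "moderate U B" "real_net A" "real_net B"
  shows "nonneg_net (\<lambda>\<phi>. A \<phi> * B \<phi>)"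
proof -
  have "negligible U (\<lambda>\<phi>. A \<phi> * B \<phi>)" if "negligible U B"
    using negligible_mult_moderate[OF that assms(3)] by (simp add: mult.commute)
  then show ?thesis using assms unfolding nonneg_net_def
    by (elim disjE) (simp_all add: negligible_mult_moderate strictly_pos_mult)
qed

lemma nonneg_net_antisym:
  assumes "nonneg_net A" "nonneg_net (\<lambda>\<phi>. - A \<phi>)"
  shows "negligible U A"
proof -
  have "negligible U A" if "negligible U (\<lambda>\<phi>. - A \<phi>)"
    using negligible_uminus[OF that] by simp
  then show ?thesis using assms not_strictly_pos_uminus unfolding nonneg_net_def by blast
qed

lemma nonneg_net_total: "real_net A \<Longrightarrow> nonneg_net A \<or> nonneg_net (\<lambda>\<phi>. - A \<phi>)"
  using strictly_pos_or_uminus unfolding nonneg_net_def by blast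

lemma nonneg_net_if_eventually_nonneg:
  assumes "real_net A" "\<forall>\<^sub>F \<phi> in UF. 0 \<le> Re (A \<phi>)"
  shows "nonneg_net A"
proof (rule ccontr)
  assume "\<not> nonneg_net A"
  then obtain p where "\<forall>\<^sub>F \<phi> in UF. Rad \<phi> ^ p \<le> - Re (A \<phi>)"
    using strictly_pos_or_uminus[OF assms(1)] unfolding nonneg_net_def strictly_pos_def by auto
  with assms(2) eventually_Rad_power_pos[of p] have "\<forall>\<^sub>F \<phi> in UF. False"
    by eventually_elim linarith
  with UF_neq_bot show False by (simp add: eventually_False)
qed

lemma gpos_cls_iff:
  assumes "moderate U A" "real_net A"
  shows "gpos U (cls U A) \<longleftrightarrow> strictly_pos A"
proof
  assume pos: "gpos U (cls U A)"
  then obtain A' where A': "A' \<in> cls U A" "real_net A'" "\<forall>\<^sub>F \<phi> in UF. Re (A' \<phi>) > 0"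
    unfolding gpos_def real_net_def eventually_UF by blast
  then have "moderate U A'" and AA': "negligible U (\<lambda>\<phi>. A \<phi> - A' \<phi>)"
    unfolding mem_cls_iff by auto
  then have "\<not> negligible U A'"
    using pos assms cls_eq_zero_iff cls_eq_iff unfolding gpos_def by metis
  then obtain p where "\<forall>\<^sub>F \<phi> in UF. Rad \<phi> ^ p \<le> cmod (A' \<phi>)"
    by (rule not_negligibleE)
  with A'(3) have "\<forall>\<^sub>F \<phi> in UF. Rad \<phi> ^ p \<le> Re (A' \<phi>)"
    by eventually_elim (simp add: real_net_cmod[OF A'(2)])
  then have "strictly_pos A'" unfolding strictly_pos_def by blast
  then show "strictly_pos A"
    using strictly_pos_negligible_perturb AA' negligible_diff_commute by blast
next
  assume pos: "strictly_pos A"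
  then obtain p where "\<forall>\<^sub>F \<phi> in UF. Rad \<phi> ^ p \<le> Re (A \<phi>)" unfolding strictly_pos_def by blast
  with eventually_Rad_power_pos[of p] have "\<forall>\<^sub>F \<phi> in UF. Re (A \<phi>) > 0"
    by eventually_elim linarith
  moreover have "cls U A \<noteq> cls U (\<lambda>_. 0)"
    using cls_eq_zero_iff[OF assms(1)] strictly_pos_imp_not_negligible[OF pos] by simp
  ultimately show "gpos U (cls U A)" unfolding gpos_def eventually_UF
    using cls_in_Rhat[OF assms] cls_self[OF assms(1)] assms(2) unfolding real_net_def by blast
qed

lemma gle_cls_iff:
  assumes "moderate U A" "real_net A" "moderate U B" "real_net B"
  shows "gle U (cls U A) (cls U B) \<longleftrightarrow> nonneg_net (\<lambda>\<phi>. B \<phi> - A \<phi>)"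
proof -
  have "cls U A = cls U B \<longleftrightarrow> negligible U (\<lambda>\<phi>. B \<phi> - A \<phi>)"
    using cls_eq_iff[OF assms(1,3)] negligible_diff_commute by blast
  moreover have "gless U (cls U A) (cls U B) \<longleftrightarrow> strictly_pos (\<lambda>\<phi>. B \<phi> - A \<phi>)"
    unfolding gless_def using assms
    by (simp add: RH_minus_cls gpos_cls_iff moderate_intros real_net_intros)
  ultimately show ?thesis unfolding gle_def nonneg_net_def by blast
qed

lemma zero_gle_cls_iff:
  assumes "moderate U A" "real_net A"
  shows "gle U (cls U (\<lambda>_. 0)) (cls U A) \<longleftrightarrow> nonneg_net A"
  using gle_cls_iff[OF moderate_const real_net_const assms] by simp

lemma totally_ordered_field_RH: "totally_ordered_field (RH U) (gle U)"
  unfolding totally_ordered_field_def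
proof (intro conjI ballI impI)
  fix a b assume "a \<in> carrier (RH U)" "b \<in> carrier (RH U)" and ab: "gle U a b \<and> gle U b a"
  then obtain A B where A: "moderate U A" "real_net A" "a = cls U A"
    and B: "moderate U B" "real_net B" "b = cls U B" by (auto elim!: RhatE)
  with ab have "nonneg_net (\<lambda>\<phi>. B \<phi> - A \<phi>)" "nonneg_net (\<lambda>\<phi>. - (B \<phi> - A \<phi>))"
    by (simp_all add: gle_cls_iff)
  then have "negligible U (\<lambda>\<phi>. B \<phi> - A \<phi>)" by (rule nonneg_net_antisym)
  with A B show "a = b" using cls_eq_iff negligible_diff_commute by blast
next
  fix a b c assume "a \<in> carrier (RH U)" "b \<in> carrier (RH U)" "c \<in> carrier (RH U)"
    "gle U a b \<and> gle U b c"
  then show "gle U a c"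
    using nonneg_net_add
    by (fastforce elim!: RhatE simp: gle_cls_iff)
next
  fix a b assume "a \<in> carrier (RH U)" "b \<in> carrier (RH U)"
  then obtain A B where A: "moderate U A" "real_net A" "a = cls U A"
    and B: "moderate U B" "real_net B" "b = cls U B" by (auto elim!: RhatE)
  then have "nonneg_net (\<lambda>\<phi>. B \<phi> - A \<phi>) \<or> nonneg_net (\<lambda>\<phi>. - (B \<phi> - A \<phi>))"
    by (intro nonneg_net_total real_net_intros)
  with A B show "gle U a b \<or> gle U b a" by (simp add: gle_cls_iff)
next
  fix a b c assume "a \<in> carrier (RH U)" "b \<in> carrier (RH U)" "c \<in> carrier (RH U)" "gle U a b"
  then show "gle U (a \<oplus>\<^bsub>RH U\<^esub> c) (b \<oplus>\<^bsub>RH U\<^esub> c)"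
    by (auto elim!: RhatE simp: gadd_cls gle_cls_iff moderate_intros real_net_intros)
next
  fix a b assume "a \<in> carrier (RH U)" "b \<in> carrier (RH U)" "gle U \<zero>\<^bsub>RH U\<^esub> a \<and> gle U \<zero>\<^bsub>RH U\<^esub> b"
  then show "gle U \<zero>\<^bsub>RH U\<^esub> (a \<otimes>\<^bsub>RH U\<^esub> b)"
    by (auto elim!: RhatE simp: gmult_cls zero_gle_cls_iff moderate_intros real_net_intros
        intro: nonneg_net_mult)
qed (auto simp: field_RH gle_def)
section \<open>Square roots and the absolute value\<close>

lemma gle_cls_if_eventually_le:
  assumes "moderate U A" "real_net A" "moderate U B" "real_net B"
    and "\<forall>\<^sub>F \<phi> in UF. Re (A \<phi>) \<le> Re (B \<phi>)"
  shows "gle U (cls U A) (cls U B)"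
proof -
  from assms(5) have "\<forall>\<^sub>F \<phi> in UF. 0 \<le> Re (B \<phi> - A \<phi>)" by eventually_elim simp
  with assms show ?thesis
    by (simp add: gle_cls_iff nonneg_net_if_eventually_nonneg real_net_intros)
qed

lemma moderate_norm_net: "moderate U Z \<Longrightarrow> moderate U (norm_net Z)"
  and moderate_Re_net: "moderate U Z \<Longrightarrow> moderate U (Re_net Z)"
  and moderate_Im_net: "moderate U Z \<Longrightarrow> moderate U (Im_net Z)"
  unfolding norm_net_def Re_net_def Im_net_def
  by (auto elim!: moderate_bound_mono intro!: always_eventually simp: abs_Re_le_cmod abs_Im_le_cmod)

lemma moderate_sqrt_abs_Re:
  assumes "moderate U A"
  shows "moderate U (\<lambda>\<phi>. complex_of_real (sqrt \<bar>Re (A \<phi>)\<bar>))"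
proof (rule moderate_bound_mono)
  show "moderate U (\<lambda>\<phi>. norm_net A \<phi> + 1)"
    using assms by (intro moderate_add moderate_const moderate_norm_net)
  have "sqrt \<bar>Re (A \<phi>)\<bar> \<le> cmod (norm_net A \<phi> + 1)" for \<phi>
  proof -
    have "sqrt \<bar>Re (A \<phi>)\<bar> \<le> 1 + \<bar>Re (A \<phi>)\<bar>" by (rule sqrt_le_one_plus) simp
    also have "\<dots> \<le> cmod (A \<phi>) + 1" using abs_Re_le_cmod[of "A \<phi>"] by simp
    finally show ?thesis unfolding norm_net_def by (simp add: norm_of_real_add1)
  qed
  then show "\<forall>\<^sub>F \<phi> in UF. cmod (complex_of_real (sqrt \<bar>Re (A \<phi>)\<bar>)) \<le> cmod (norm_net A \<phi> + 1)"
    by (simp add: always_eventually)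
qed

lemma zero_gle_iff_square:
  assumes "a \<in> Rhat U"
  shows "gle U (cls U (\<lambda>_. 0)) a \<longleftrightarrow> (\<exists>b\<in>Rhat U. a = gmult U b b)"
proof
  obtain A where A: "moderate U A" "real_net A" "a = cls U A" using assms by (rule RhatE)
  assume "gle U (cls U (\<lambda>_. 0)) a"
  then consider "negligible U A" | "strictly_pos A"
    using A by (auto simp: zero_gle_cls_iff nonneg_net_def)
  then show "\<exists>b\<in>Rhat U. a = gmult U b b"
  proof cases
    case 1
    then have "a = gmult U (cls U (\<lambda>_. 0)) (cls U (\<lambda>_. 0))"
      using A by (simp add: gmult_cls cls_eq_zero_iff moderate_const)
    then show ?thesis using cls_in_Rhat[OF moderate_const real_net_const] by auto
  next
    case 2
    define B where "B = (\<lambda>\<phi>. complex_of_real (sqrt \<bar>Re (A \<phi>)\<bar>))"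
    obtain p where "\<forall>\<^sub>F \<phi> in UF. Rad \<phi> ^ p \<le> Re (A \<phi>)" using 2 unfolding strictly_pos_def by blast
    with eventually_Rad_power_pos[of p] have "\<forall>\<^sub>F \<phi> in UF. cmod (A \<phi> - B \<phi> * B \<phi>) \<le> cmod 0"
    proof eventually_elim
      case (elim \<phi>)
      then have "B \<phi> * B \<phi> = complex_of_real (Re (A \<phi>))"
        unfolding B_def by (simp flip: of_real_mult)
      then show ?case using real_net_of_Re[OF A(2)] by simp
    qed
    then have "negligible U (\<lambda>\<phi>. A \<phi> - B \<phi> * B \<phi>)" by (rule negligible_bound_mono[OF negligible_zero])
    moreover have "moderate U B" unfolding B_def using A(1) by (rule moderate_sqrt_abs_Re)
    ultimately have "a = gmult U (cls U B) (cls U B)"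
      using A by (simp add: gmult_cls cls_eq_iff moderate_mult)
    moreover have "real_net B" unfolding B_def by (rule real_net_of_real)
    with \<open>moderate U B\<close> have "cls U B \<in> Rhat U" by (rule cls_in_Rhat)
    ultimately show ?thesis by blast
  qed
next
  assume "\<exists>b\<in>Rhat U. a = gmult U b b"
  then obtain B where B: "moderate U B" "real_net B" "a = cls U (\<lambda>\<phi>. B \<phi> * B \<phi>)"
    by (auto elim!: RhatE simp: gmult_cls)
  have "\<forall>\<^sub>F \<phi> in UF. 0 \<le> Re (B \<phi> * B \<phi>)"
    using B(2) unfolding real_net_def by (simp add: always_eventually)
  then show "gle U (cls U (\<lambda>_. 0)) a"
    using B by (simp add: zero_gle_cls_iff nonneg_net_if_eventually_nonneg moderate_mult real_net_mult)
qed

lemma nonneg_net_square_unique: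
  assumes "moderate U X" "real_net X" "nonneg_net X" "moderate U Y" "real_net Y" "nonneg_net Y"
    and sq: "negligible U (\<lambda>\<phi>. X \<phi> * X \<phi> - Y \<phi> * Y \<phi>)"
  shows "negligible U (\<lambda>\<phi>. X \<phi> - Y \<phi>)"
proof -
  have not_mixed: False
    if "moderate U X" "negligible U X" "real_net Y" "strictly_pos Y"
      "negligible U (\<lambda>\<phi>. X \<phi> * X \<phi> - Y \<phi> * Y \<phi>)" for X Y
  proof -
    have "negligible U (\<lambda>\<phi>. X \<phi> * X \<phi> - (X \<phi> * X \<phi> - Y \<phi> * Y \<phi>))"
      using negligible_diff[OF negligible_mult_moderate[OF that(2,1)] that(5)] .
    moreover have "strictly_pos (\<lambda>\<phi>. Y \<phi> * Y \<phi>)" using that by (intro strictly_pos_mult)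
    ultimately show False using strictly_pos_imp_not_negligible by simp
  qed
  have sq': "negligible U (\<lambda>\<phi>. Y \<phi> * Y \<phi> - X \<phi> * X \<phi>)"
    using sq negligible_diff_commute[of "\<lambda>\<phi>. X \<phi> * X \<phi>" "\<lambda>\<phi>. Y \<phi> * Y \<phi>"] by simp
  consider "negligible U X" "negligible U Y" | "strictly_pos X" "strictly_pos Y"
    using assms not_mixed[of X Y] not_mixed[of Y X] sq sq' unfolding nonneg_net_def by blast
  then show ?thesis
  proof cases
    case 1
    then show ?thesis by (rule negligible_diff)
  next
    case 2
    obtain p where p: "\<forall>\<^sub>F \<phi> in UF. Rad \<phi> ^ p \<le> Re (X \<phi>)"
      using 2 unfolding strictly_pos_def by blast
    obtain q where q: "\<forall>\<^sub>F \<phi> in UF. Rad \<phi> ^ q \<le> Re (Y \<phi>)"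
      using 2 unfolding strictly_pos_def by blast
    show ?thesis unfolding negligible_iff
    proof
      fix k
      have "\<forall>\<^sub>F \<phi> in UF. cmod (X \<phi> * X \<phi> - Y \<phi> * Y \<phi>) < Rad \<phi> ^ (k + p)"
        using sq unfolding negligible_iff ..
      with p q eventually_Rad_power_pos[of p] eventually_Rad_power_pos[of q]
      show "\<forall>\<^sub>F \<phi> in UF. cmod (X \<phi> - Y \<phi>) < Rad \<phi> ^ k"
      proof eventually_elim
        case (elim \<phi>)
        have "Rad \<phi> ^ p \<le> cmod (X \<phi> + Y \<phi>)"
          using elim complex_Re_le_cmod[of "X \<phi> + Y \<phi>"] by simp
        then have "cmod (X \<phi> - Y \<phi>) * Rad \<phi> ^ p \<le> cmod (X \<phi> - Y \<phi>) * cmod (X \<phi> + Y \<phi>)"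
          by (intro mult_left_mono) auto
        also have "\<dots> = cmod (X \<phi> * X \<phi> - Y \<phi> * Y \<phi>)"
          by (simp add: norm_mult[symmetric] algebra_simps)
        also have "\<dots> < Rad \<phi> ^ k * Rad \<phi> ^ p" using elim by (simp add: power_add)
        finally show ?case using elim by simp
      qed
    qed
  qed
qed

lemma cls_eq_Re_plus_i_Im:
  assumes "moderate U Z"
  shows "cls U Z = gadd U (cls U (Re_net Z)) (gmult U (cls U (\<lambda>_. \<i>)) (cls U (Im_net Z)))"
proof -
  have "(\<lambda>\<phi>. Re_net Z \<phi> + \<i> * Im_net Z \<phi>) = Z"
    unfolding Re_net_def Im_net_def by (auto simp: complex_eq_iff)
  then show ?thesis
    using assms by (simp add: gmult_cls gadd_cls moderate_intros moderate_Re_net moderate_Im_net)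
qed

lemma Re_plus_i_Im_unique:
  assumes "moderate U Z" "moderate U A" "real_net A" "moderate U B" "real_net B"
    and "cls U Z = gadd U (cls U A) (gmult U (cls U (\<lambda>_. \<i>)) (cls U B))"
  shows "cls U A = cls U (Re_net Z)" "cls U B = cls U (Im_net Z)"
proof -
  have "cls U Z = cls U (\<lambda>\<phi>. A \<phi> + \<i> * B \<phi>)"
    using assms by (simp add: gmult_cls gadd_cls moderate_intros)
  then have err: "negligible U (\<lambda>\<phi>. Z \<phi> - (A \<phi> + \<i> * B \<phi>))"
    using assms by (simp add: cls_eq_iff moderate_intros)
  have "cmod (A \<phi> - Re_net Z \<phi>) \<le> cmod (Z \<phi> - (A \<phi> + \<i> * B \<phi>))"
    and "cmod (B \<phi> - Im_net Z \<phi>) \<le> cmod (Z \<phi> - (A \<phi> + \<i> * B \<phi>))" for \<phi>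
  proof -
    have "Im (A \<phi>) = 0" "Im (B \<phi>) = 0" using assms(3,5) unfolding real_net_def by auto
    then show "cmod (A \<phi> - Re_net Z \<phi>) \<le> cmod (Z \<phi> - (A \<phi> + \<i> * B \<phi>))"
      and "cmod (B \<phi> - Im_net Z \<phi>) \<le> cmod (Z \<phi> - (A \<phi> + \<i> * B \<phi>))"
      using abs_Re_le_cmod[of "Z \<phi> - (A \<phi> + \<i> * B \<phi>)"] abs_Im_le_cmod[of "Z \<phi> - (A \<phi> + \<i> * B \<phi>)"]
      unfolding Re_net_def Im_net_def by (simp_all add: cmod_eq_Re abs_minus_commute)
  qed
  then have "negligible U (\<lambda>\<phi>. A \<phi> - Re_net Z \<phi>)" "negligible U (\<lambda>\<phi>. B \<phi> - Im_net Z \<phi>)"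
    by (auto intro!: negligible_bound_mono[OF err] always_eventually)
  then show "cls U A = cls U (Re_net Z)" "cls U B = cls U (Im_net Z)"
    using assms by (simp_all add: cls_eq_iff moderate_Re_net moderate_Im_net)
qed

lemma nonneg_norm_net: "nonneg_net (norm_net Z)"
  unfolding norm_net_def by (intro nonneg_net_if_eventually_nonneg real_net_of_real) simp

lemma norm_net_square: "norm_net Z \<phi> * norm_net Z \<phi> = Re_net Z \<phi> * Re_net Z \<phi> + Im_net Z \<phi> * Im_net Z \<phi>"
proof -
  have "cmod (Z \<phi>) * cmod (Z \<phi>) = Re (Z \<phi>) * Re (Z \<phi>) + Im (Z \<phi>) * Im (Z \<phi>)"
    using cmod_power2[of "Z \<phi>"] by (simp add: power2_eq_square)
  then show ?thesis unfolding norm_net_def Re_net_def Im_net_def by (metis of_real_add of_real_mult)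
qed

lemma gabs_cls:
  assumes Z: "moderate U Z"
  shows "gabs U (cls U Z) = cls U (norm_net Z)"
  unfolding gabs_def
proof (rule the_equality)
  have "cls U (norm_net Z) \<in> Rhat U" "cls U (Re_net Z) \<in> Rhat U" "cls U (Im_net Z) \<in> Rhat U"
    using Z by (simp_all add: cls_in_Rhat moderate_norm_net moderate_Re_net moderate_Im_net
        real_net_norm_net real_net_Re_net real_net_Im_net)
  moreover have "gle U (cls U (\<lambda>_. 0)) (cls U (norm_net Z))"
    using Z by (simp add: zero_gle_cls_iff moderate_norm_net real_net_norm_net nonneg_norm_net)
  moreover have "gmult U (cls U (norm_net Z)) (cls U (norm_net Z)) =
      gadd U (gmult U (cls U (Re_net Z)) (cls U (Re_net Z))) (gmult U (cls U (Im_net Z)) (cls U (Im_net Z)))"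
    using Z by (simp add: gmult_cls gadd_cls norm_net_square moderate_mult
        moderate_norm_net moderate_Re_net moderate_Im_net)
  ultimately show "cls U (norm_net Z) \<in> Rhat U \<and> gle U (cls U (\<lambda>_. 0)) (cls U (norm_net Z)) \<and>
      (\<exists>a\<in>Rhat U. \<exists>b\<in>Rhat U. cls U Z = gadd U a (gmult U (cls U (\<lambda>_. \<i>)) b) \<and>
          gmult U (cls U (norm_net Z)) (cls U (norm_net Z)) = gadd U (gmult U a a) (gmult U b b))"
    using cls_eq_Re_plus_i_Im[OF Z] by blast
next
  fix c assume "c \<in> Rhat U \<and> gle U (cls U (\<lambda>_. 0)) c \<and>
      (\<exists>a\<in>Rhat U. \<exists>b\<in>Rhat U. cls U Z = gadd U a (gmult U (cls U (\<lambda>_. \<i>)) b) \<and>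
          gmult U c c = gadd U (gmult U a a) (gmult U b b))"
  then obtain a b where c: "c \<in> Rhat U" "gle U (cls U (\<lambda>_. 0)) c" and "a \<in> Rhat U" "b \<in> Rhat U"
    and decomp: "cls U Z = gadd U a (gmult U (cls U (\<lambda>_. \<i>)) b)"
    and sq: "gmult U c c = gadd U (gmult U a a) (gmult U b b)"
    by blast
  obtain C where C: "moderate U C" "real_net C" "c = cls U C" using c(1) by (rule RhatE)
  obtain A where A: "moderate U A" "real_net A" "a = cls U A" using \<open>a \<in> Rhat U\<close> by (rule RhatE)
  obtain B where B: "moderate U B" "real_net B" "b = cls U B" using \<open>b \<in> Rhat U\<close> by (rule RhatE)
  have "cls U Z = gadd U (cls U A) (gmult U (cls U (\<lambda>_. \<i>)) (cls U B))"
    using decomp A(3) B(3) by simp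
  from Re_plus_i_Im_unique[OF Z A(1,2) B(1,2) this] A(3) B(3)
  have "a = cls U (Re_net Z)" "b = cls U (Im_net Z)" by simp_all
  with sq C Z have "cls U (\<lambda>\<phi>. C \<phi> * C \<phi>) = cls U (\<lambda>\<phi>. norm_net Z \<phi> * norm_net Z \<phi>)"
    by (simp add: gmult_cls gadd_cls norm_net_square moderate_mult moderate_Re_net moderate_Im_net)
  then have "negligible U (\<lambda>\<phi>. C \<phi> * C \<phi> - norm_net Z \<phi> * norm_net Z \<phi>)"
    using C Z by (simp add: cls_eq_iff moderate_mult moderate_norm_net)
  moreover have "nonneg_net C" using c(2) C by (simp add: zero_gle_cls_iff)
  ultimately have "negligible U (\<lambda>\<phi>. C \<phi> - norm_net Z \<phi>)"
    using nonneg_net_square_unique[OF C(1,2) _ moderate_norm_net[OF Z] real_net_norm_net nonneg_norm_net]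
    by blast
  then show "c = cls U (norm_net Z)" using C Z by (simp add: cls_eq_iff moderate_norm_net)
qed

lemma absolute_value_gabs: "is_absolute_value (CH U) (RH U) (gle U) (gabs U)"
  unfolding is_absolute_value_def
proof (intro conjI ballI)
  fix x assume "x \<in> carrier (CH U)"
  then obtain Z where Z: "moderate U Z" "x = cls U Z" by (auto elim: ChatE)
  then show "gabs U x \<in> carrier (RH U)" "gle U \<zero>\<^bsub>RH U\<^esub> (gabs U x)"
    by (simp_all add: gabs_cls cls_in_Rhat moderate_norm_net real_net_norm_net
        zero_gle_cls_iff nonneg_norm_net)
  have "negligible U (norm_net Z) \<longleftrightarrow> negligible U Z"
    using negligible_bound_mono[of Z "norm_net Z"] negligible_bound_mono[of "norm_net Z" Z]
    by (auto simp: norm_net_def)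
  with Z show "gabs U x = \<zero>\<^bsub>RH U\<^esub> \<longleftrightarrow> x = \<zero>\<^bsub>CH U\<^esub>"
    by (simp add: gabs_cls cls_eq_zero_iff moderate_norm_net)
next
  fix x y assume "x \<in> carrier (CH U)" "y \<in> carrier (CH U)"
  then obtain Z W where Z: "moderate U Z" "x = cls U Z" and W: "moderate U W" "y = cls U W"
    by (auto elim!: ChatE)
  have "norm_net (\<lambda>\<phi>. Z \<phi> * W \<phi>) = (\<lambda>\<phi>. norm_net Z \<phi> * norm_net W \<phi>)"
    unfolding norm_net_def by (simp add: norm_mult)
  with Z W show "gabs U (x \<otimes>\<^bsub>CH U\<^esub> y) = gabs U x \<otimes>\<^bsub>RH U\<^esub> gabs U y"
    by (simp add: gmult_cls gabs_cls moderate_mult moderate_norm_net)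
  have "\<forall>\<^sub>F \<phi> in UF. Re (norm_net (\<lambda>\<phi>. Z \<phi> + W \<phi>) \<phi>) \<le> Re (norm_net Z \<phi> + norm_net W \<phi>)"
    by (simp add: norm_net_def norm_triangle_ineq always_eventually)
  then have "gle U (cls U (norm_net (\<lambda>\<phi>. Z \<phi> + W \<phi>))) (cls U (\<lambda>\<phi>. norm_net Z \<phi> + norm_net W \<phi>))"
    using Z W by (intro gle_cls_if_eventually_le)
      (simp_all add: moderate_add moderate_norm_net real_net_norm_net real_net_add)
  with Z W show "gle U (gabs U (x \<oplus>\<^bsub>CH U\<^esub> y)) (gabs U x \<oplus>\<^bsub>RH U\<^esub> gabs U y)"
    by (simp add: gadd_cls gabs_cls moderate_add moderate_norm_net)
qed

end

theorem corollary4p3: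
  fixes U :: "('n::finite) test set set"
  assumes "free_ultrafilter_on D0 U"
    and "\<And>n. n \<ge> 1 \<Longrightarrow> Dn n \<in> U"
    and "cplus_good U"
  shows "totally_ordered_field (RH U) (gle U)
       \<and> (\<forall>a\<in>Rhat U. gle U (cls U (\<lambda>_. 0)) a \<longleftrightarrow> (\<exists>b\<in>Rhat U. a = gmult U b b))
       \<and> is_absolute_value (CH U) (RH U) (gle U) (gabs U)"
proof -
  interpret generalized_numbers U
    using assms(1,2) unfolding free_ultrafilter_on_def by unfold_locales blast+
  show ?thesis
    using totally_ordered_field_RH zero_gle_iff_square absolute_value_gabs by blast
qed

end
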